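(* Let $n,m\ge1$, $C:\{0,1\}^n\to\{0,1\}^m$, $\varepsilon\in(0,1)$, $\tilde\varepsilon=(4/100)^2\varepsilon^2$, $t=\lfloor n/\tilde\varepsilon\rfloor$, and $\alpha>1$ such that $j^*$ (defined below) exists. Suppose $$\Pr_{y\leftarrow\mathcal{D}^C}\big[\mathcal{D}^C(y)\in(1\pm 100\sqrt{\tilde\varepsilon})\,\alpha2^{-m}\big]\le\tilde\varepsilon^{1/4}.$$ Let $c=\lceil 25/\sqrt{\tilde\varepsilon}\rceil$. Then (i) $2^{-(j^*-c)\tilde\varepsilon}\le 2^{28\sqrt{\tilde\varepsilon}}\alpha2^{-m}$ and $2^{-(j^*+c)\tilde\varepsilon}\ge 2^{-28\sqrt{\tilde\varepsilon}}\alpha2^{-m}$; (ii) $\sum_{j=j^*-c}^{j^*+c} h^C_j\le\tilde\varepsilon^{1/4}$; (iii) $\sum_{j\le j^*} h^C_j\in[g_H\pm\tilde\varepsilon^{1/4}]$; (iv) $\frac{1}{2^m}\sum_{j\le j^*}h^C_j\,2^{j\tilde\varepsilon}\in[g_{UH}\pm 4\tilde\varepsilon^{1/4}]$.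
   Context: For $C:\{0,1\}^n\to\{0,1\}^m$, $\mathcal{D}^C$ is the distribution on $\{0,1\}^m$ with $\mathcal{D}^C(y)=\Pr_{r\leftarrow\{0,1\}^n}[C(r)=y]$ ($r$ uniform). The $(\tilde\varepsilon,t)$-histogram of $\mathcal{D}^C$ is $h^C=(h^C_0,\dots,h^C_t)$ with $h^C_i=\sum_{y\in\mathcal{B}_i}\mathcal{D}^C(y)$, where $\mathcal{B}_i=\{y:\mathcal{D}^C(y)\in(2^{-(i+1)\tilde\varepsilon},2^{-i\tilde\varepsilon}]\}$; by convention $h^C_j=0$ for integers $j\notin\{0,\dots,t\}$. $j^*=\max\{j\in\mathbb{Z}_{\ge0}: 2^{-(j+1)\tilde\varepsilon}>\alpha2^{-m}\}$. $g_H=\Pr_{y\leftarrow\mathcal{D}^C}[\mathcal{D}^C(y)\ge\alpha2^{-m}]$ and $g_{UH}=\Pr_{y\leftarrow\{0,1\}^m\text{ uniform}}[\mathcal{D}^C(y)\ge\alpha2^{-m}]$. Notation: $[a\pm b]=[a-b,a+b]$ and $(1\pm\delta)x=[(1-\delta)x,(1+\delta)x]$. *)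

theory Defs
  imports Complex_Main
begin

definition bits :: "nat \<Rightarrow> bool list set" where
  "bits k = {xs. length xs = k}"

definition distr :: "nat \<Rightarrow> (bool list \<Rightarrow> bool list) \<Rightarrow> bool list \<Rightarrow> real" where
  "distr n C y = real (card {r \<in> bits n. C r = y}) / 2 ^ n"

definition bucket :: "nat \<Rightarrow> nat \<Rightarrow> (bool list \<Rightarrow> bool list) \<Rightarrow> real \<Rightarrow> int \<Rightarrow> bool list set" where
  "bucket n m C e i =
     {y \<in> bits m. 2 powr (- (real_of_int i + 1) * e) < distr n C y \<and>
                  distr n C y \<le> 2 powr (- real_of_int i * e)}"

definition hist :: "nat \<Rightarrow> nat \<Rightarrow> (bool list \<Rightarrow> bool list) \<Rightarrow> real \<Rightarrow> nat \<Rightarrow> int \<Rightarrow> real" where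
  "hist n m C e t j =
     (if 0 \<le> j \<and> j \<le> int t then (\<Sum>y\<in>bucket n m C e j. distr n C y) else 0)"

definition jstar :: "nat \<Rightarrow> real \<Rightarrow> real \<Rightarrow> int" where
  "jstar m e \<alpha> = (GREATEST j::int. 0 \<le> j \<and> 2 powr (- (real_of_int j + 1) * e) > \<alpha> * 2 powr (- real m))"

definition gH :: "nat \<Rightarrow> nat \<Rightarrow> (bool list \<Rightarrow> bool list) \<Rightarrow> real \<Rightarrow> real" where
  "gH n m C \<alpha> = (\<Sum>y\<in>{y \<in> bits m. distr n C y \<ge> \<alpha> * 2 powr (- real m)}. distr n C y)"

definition gUH :: "nat \<Rightarrow> nat \<Rightarrow> (bool list \<Rightarrow> bool list) \<Rightarrow> real \<Rightarrow> real" where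
  "gUH n m C \<alpha> = real (card {y \<in> bits m. distr n C y \<ge> \<alpha> * 2 powr (- real m)}) / 2 ^ m"

end

theory Submission
  imports Defs
begin

text \<open>
  Bucket j holds the y with D(y) in (2^-(j+1)e, 2^-je], so buckets 0..j* together are exactly
  the y with D(y) > b = 2^-(j*+1)e, and by maximality of j* this threshold lies between
  a = alpha 2^-m and 2^e a. Hence the histogram mass up to j* differs from g_H only by the
  mass of the y with D(y) in [a, b], and the buckets j*-c..j*+c only contain y with D(y)
  within a factor 2^(28 sqrt e) of a. Both sets lie in the band (1 +- 100 sqrt e) a, whose
  mass is at most e^(1/4) by hypothesis. For the uniform measure, each y in bucket j has
  D(y) 2^je in [2^-e, 1], so the weighted histogram counts the y above b up to a factor 2^-e,
  while the heavy y below b each carry mass at least 2^-m, so there are at most 2^m e^(1/4)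
  of them.
\<close>

lemma finite_bits [simp]: "finite (bits k)"
  using finite_lists_length_eq[of "UNIV :: bool set" k] by (simp add: bits_def)

lemma card_bits: "card (bits k) = 2 ^ k"
  using card_lists_length_eq[of "UNIV :: bool set" k] by (simp add: bits_def)

lemma distr_nonneg: "0 \<le> distr n C y"
  by (simp add: distr_def)

lemma distr_le_one: "distr n C y \<le> 1"
proof -
  have "card {r \<in> bits n. C r = y} \<le> card (bits n)" by (rule card_mono) auto
  then show ?thesis by (simp add: distr_def card_bits)
qed

lemma two_powr_neg_le_distr:
  assumes "0 < distr n C y"
  shows "2 powr (- real n) \<le> distr n C y"
proof -
  have "1 \<le> card {r \<in> bits n. C r = y}"
    using assms by (cases "card {r \<in> bits n. C r = y}") (auto simp: distr_def)
  then show ?thesis by (simp add: distr_def powr_minus powr_realpow divide_simps)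
qed

lemma bucket_subset_bits: "bucket n m C e j \<subseteq> bits m"
  by (auto simp: bucket_def)

lemma finite_bucket [simp]: "finite (bucket n m C e j)"
  using finite_subset[OF bucket_subset_bits] by simp

lemma disjoint_bucket:
  assumes "0 < e" "i \<noteq> j"
  shows "bucket n m C e i \<inter> bucket n m C e j = {}"
proof -
  have below: "k < l + 1" if "y \<in> bucket n m C e l" "y \<in> bucket n m C e k" for k l y
  proof -
    from that have "2 powr (- (real_of_int l + 1) * e) < distr n C y"
      and "distr n C y \<le> 2 powr (- real_of_int k * e)" by (simp_all add: bucket_def)
    then have "2 powr (- (real_of_int l + 1) * e) < 2 powr (- real_of_int k * e)" by (rule less_le_trans)
    then have "real_of_int k * e < (real_of_int l + 1) * e" by (simp add: algebra_simps)
    then show ?thesis using \<open>0 < e\<close> by (simp add: mult_less_cancel_right)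
  qed
  show ?thesis using below[of _ i j] below[of _ j i] \<open>i \<noteq> j\<close> by fastforce
qed

lemma bucket_eq_empty:
  assumes "0 < e" "real n < real_of_int j * e"
  shows "bucket n m C e j = {}"
proof (rule ccontr)
  assume "bucket n m C e j \<noteq> {}"
  then obtain y where y: "y \<in> bucket n m C e j" by blast
  then have "2 powr (- (real_of_int j + 1) * e) < distr n C y" by (simp add: bucket_def)
  then have "0 < distr n C y" using powr_gt_zero[of 2 "- (real_of_int j + 1) * e"] by linarith
  moreover have "distr n C y \<le> 2 powr (- real_of_int j * e)" using y by (simp add: bucket_def)
  ultimately have "2 powr (- real n) \<le> 2 powr (- real_of_int j * e)"
    using two_powr_neg_le_distr order_trans by blast
  with assms(2) show False by simp
qed

lemma hist_le_sum_bucket: "hist n m C e t j \<le> (\<Sum>y\<in>bucket n m C e j. distr n C y)"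
  by (simp add: hist_def sum_nonneg distr_nonneg)

text \<open>Buckets beyond t are empty because every nonzero probability is at least 2^-n.\<close>
lemma hist_eq_sum_bucket:
  assumes "0 < e" "t = nat \<lfloor>real n / e\<rfloor>" "0 \<le> j"
  shows "hist n m C e t j = (\<Sum>y\<in>bucket n m C e j. distr n C y)"
proof (cases "j \<le> int t")
  case False
  then have "real n / e < real_of_int j" using assms(2) by linarith
  then have "bucket n m C e j = {}" using assms(1) by (intro bucket_eq_empty) (simp_all add: field_simps)
  with False show ?thesis by (simp add: hist_def)
qed (use assms(3) in \<open>simp add: hist_def\<close>)

lemma mem_bucket_floor_log:
  assumes "0 < e" "y \<in> bits m" "0 < distr n C y"
  shows "y \<in> bucket n m C e \<lfloor>- log 2 (distr n C y) / e\<rfloor>"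
proof -
  define q where "q = - log 2 (distr n C y) / e"
  define k where "k = \<lfloor>q\<rfloor>"
  have "real_of_int k \<le> q" "q < real_of_int k + 1" unfolding k_def by linarith+
  then have "real_of_int k * e \<le> q * e" "q * e < (real_of_int k + 1) * e"
    using assms(1) by simp_all
  moreover have "q * e = - log 2 (distr n C y)" using assms(1) by (simp add: q_def)
  ultimately have "- (real_of_int k + 1) * e < log 2 (distr n C y)" "log 2 (distr n C y) \<le> - real_of_int k * e"
    by (auto simp: algebra_simps)
  then have "2 powr (- (real_of_int k + 1) * e) < distr n C y" "distr n C y \<le> 2 powr (- real_of_int k * e)"
    using assms(3) by (simp_all add: less_log_iff[symmetric] log_le_iff[symmetric])
  then show ?thesis using assms(2) by (simp add: bucket_def k_def q_def)
qed

lemma Union_bucket_subset: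
  assumes "0 \<le> e"
  shows "(\<Union>j\<in>{lo..hi}. bucket n m C e j) \<subseteq>
    {y \<in> bits m. 2 powr (- (real_of_int hi + 1) * e) < distr n C y \<and> distr n C y \<le> 2 powr (- real_of_int lo * e)}"
proof
  fix y assume "y \<in> (\<Union>j\<in>{lo..hi}. bucket n m C e j)"
  then obtain j where j: "lo \<le> j" "j \<le> hi" "y \<in> bucket n m C e j" by auto
  from j(3) have "y \<in> bits m" and lo: "2 powr (- (real_of_int j + 1) * e) < distr n C y"
    and hi: "distr n C y \<le> 2 powr (- real_of_int j * e)" by (simp_all add: bucket_def)
  have "2 powr (- (real_of_int hi + 1) * e) \<le> 2 powr (- (real_of_int j + 1) * e)"
    "2 powr (- real_of_int j * e) \<le> 2 powr (- real_of_int lo * e)"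
    using j(1,2) assms by (auto intro!: powr_mono mult_right_mono)
  with lo hi \<open>y \<in> bits m\<close> show "y \<in> {y \<in> bits m. 2 powr (- (real_of_int hi + 1) * e) < distr n C y \<and>
      distr n C y \<le> 2 powr (- real_of_int lo * e)}"
    by (blast intro: le_less_trans order_trans)
qed

lemma Union_bucket_atLeastAtMost:
  assumes "0 < e"
  shows "(\<Union>j\<in>{0..J}. bucket n m C e j) = {y \<in> bits m. 2 powr (- (real_of_int J + 1) * e) < distr n C y}"
proof
  show "(\<Union>j\<in>{0..J}. bucket n m C e j) \<subseteq> {y \<in> bits m. 2 powr (- (real_of_int J + 1) * e) < distr n C y}"
    using Union_bucket_subset[of e n m C 0 J] assms by auto
next
  show "{y \<in> bits m. 2 powr (- (real_of_int J + 1) * e) < distr n C y} \<subseteq> (\<Union>j\<in>{0..J}. bucket n m C e j)"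
  proof
    fix y assume y: "y \<in> {y \<in> bits m. 2 powr (- (real_of_int J + 1) * e) < distr n C y}"
    define k where "k = \<lfloor>- log 2 (distr n C y) / e\<rfloor>"
    have "2 powr (- (real_of_int J + 1) * e) < distr n C y" using y by simp
    then have pos: "0 < distr n C y" using powr_gt_zero[of 2 "- (real_of_int J + 1) * e"] by linarith
    have "log 2 (distr n C y) \<le> 0" using pos distr_le_one[of n C y] by simp
    then have "0 \<le> k" using assms by (simp add: k_def divide_nonpos_pos)
    have "- (real_of_int J + 1) * e < log 2 (distr n C y)" using y pos by (simp add: less_log_iff)
    then have "- log 2 (distr n C y) / e < real_of_int J + 1" using assms by (simp add: field_simps)
    then have "k \<le> J" unfolding k_def by linarith
    moreover have "y \<in> bucket n m C e k" using mem_bucket_floor_log[OF assms _ pos] y by (simp add: k_def)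
    ultimately show "y \<in> (\<Union>j\<in>{0..J}. bucket n m C e j)" using \<open>0 \<le> k\<close> by auto
  qed
qed

definition band_mass :: "nat \<Rightarrow> nat \<Rightarrow> (bool list \<Rightarrow> bool list) \<Rightarrow> real \<Rightarrow> real \<Rightarrow> real" where
  "band_mass n m C L U = (\<Sum>y\<in>{y \<in> bits m. L \<le> distr n C y \<and> distr n C y \<le> U}. distr n C y)"

lemma band_mass_mono:
  assumes "L' \<le> L" "U \<le> U'"
  shows "band_mass n m C L U \<le> band_mass n m C L' U'"
  unfolding band_mass_def using assms by (intro sum_mono2) (auto simp: distr_nonneg)

lemma sum_hist_le_band_mass:
  assumes "0 < e" "L \<le> 2 powr (- (real_of_int hi + 1) * e)" "2 powr (- real_of_int lo * e) \<le> U"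
  shows "(\<Sum>j\<in>{lo..hi}. hist n m C e t j) \<le> band_mass n m C L U"
proof -
  have "(\<Sum>j\<in>{lo..hi}. hist n m C e t j) \<le> (\<Sum>j\<in>{lo..hi}. \<Sum>y\<in>bucket n m C e j. distr n C y)"
    by (intro sum_mono hist_le_sum_bucket)
  also have "\<dots> = (\<Sum>y\<in>(\<Union>j\<in>{lo..hi}. bucket n m C e j). distr n C y)"
    using assms(1) disjoint_bucket by (intro sum.UNION_disjoint[symmetric]) auto
  also have "\<dots> \<le> band_mass n m C L U"
    unfolding band_mass_def using Union_bucket_subset[of e n m C lo hi] assms
    by (intro sum_mono2) (auto simp: distr_nonneg)
  finally show ?thesis .
qed

lemma sum_hist_eq:
  assumes "0 < e" "t = nat \<lfloor>real n / e\<rfloor>"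
  shows "(\<Sum>j\<in>{0..J}. hist n m C e t j) =
    (\<Sum>y\<in>{y \<in> bits m. 2 powr (- (real_of_int J + 1) * e) < distr n C y}. distr n C y)"
proof -
  have "(\<Sum>j\<in>{0..J}. hist n m C e t j) = (\<Sum>j\<in>{0..J}. \<Sum>y\<in>bucket n m C e j. distr n C y)"
    using assms by (intro sum.cong hist_eq_sum_bucket) auto
  also have "\<dots> = (\<Sum>y\<in>(\<Union>j\<in>{0..J}. bucket n m C e j). distr n C y)"
    using assms disjoint_bucket by (intro sum.UNION_disjoint[symmetric]) auto
  finally show ?thesis using Union_bucket_atLeastAtMost[OF assms(1)] by simp
qed

lemma card_bucket_weighted_bounds:
  assumes "0 \<le> e"
  shows "real (card (bucket n m C e j)) * 2 powr (- e) \<le>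
           (\<Sum>y\<in>bucket n m C e j. distr n C y) * 2 powr (real_of_int j * e)"
    and "(\<Sum>y\<in>bucket n m C e j. distr n C y) * 2 powr (real_of_int j * e) \<le>
           real (card (bucket n m C e j))"
proof -
  have below: "2 powr (- e) \<le> distr n C y * 2 powr (real_of_int j * e)"
    and above: "distr n C y * 2 powr (real_of_int j * e) \<le> 1" if "y \<in> bucket n m C e j" for y
  proof -
    from that have lo: "2 powr (- (real_of_int j + 1) * e) \<le> distr n C y"
      and hi: "distr n C y \<le> 2 powr (- real_of_int j * e)" by (simp_all add: bucket_def)
    have "2 powr (- e) = 2 powr (- (real_of_int j + 1) * e) * 2 powr (real_of_int j * e)"
      by (subst powr_add[symmetric]) (simp add: algebra_simps)
    also have "\<dots> \<le> distr n C y * 2 powr (real_of_int j * e)" using lo by simp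
    finally show "2 powr (- e) \<le> distr n C y * 2 powr (real_of_int j * e)" .
    have "distr n C y * 2 powr (real_of_int j * e) \<le> 2 powr (- real_of_int j * e) * 2 powr (real_of_int j * e)"
      using hi by simp
    also have "\<dots> = 1" by (simp add: powr_add[symmetric])
    finally show "distr n C y * 2 powr (real_of_int j * e) \<le> 1" .
  qed
  show "real (card (bucket n m C e j)) * 2 powr (- e) \<le>
           (\<Sum>y\<in>bucket n m C e j. distr n C y) * 2 powr (real_of_int j * e)"
    unfolding sum_distrib_right by (rule sum_bounded_below) (rule below)
  show "(\<Sum>y\<in>bucket n m C e j. distr n C y) * 2 powr (real_of_int j * e) \<le>
           real (card (bucket n m C e j))"
    unfolding sum_distrib_right using sum_bounded_above[OF above] by simp
qed

lemma weighted_sum_hist_bounds: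
  fixes n m :: nat and C :: "bool list \<Rightarrow> bool list" and J :: int
  assumes "0 < e" "t = nat \<lfloor>real n / e\<rfloor>"
  defines "S \<equiv> {y \<in> bits m. 2 powr (- (real_of_int J + 1) * e) < distr n C y}"
  shows "real (card S) * 2 powr (- e) \<le> (\<Sum>j\<in>{0..J}. hist n m C e t j * 2 powr (real_of_int j * e))"
    and "(\<Sum>j\<in>{0..J}. hist n m C e t j * 2 powr (real_of_int j * e)) \<le> real (card S)"
proof -
  have card_S: "real (card S) = (\<Sum>j\<in>{0..J}. real (card (bucket n m C e j)))"
    unfolding S_def Union_bucket_atLeastAtMost[OF assms(1), symmetric]
    using assms(1) disjoint_bucket by (subst card_UN_disjoint) auto
  have weighted: "(\<Sum>j\<in>{0..J}. hist n m C e t j * 2 powr (real_of_int j * e)) =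
      (\<Sum>j\<in>{0..J}. (\<Sum>y\<in>bucket n m C e j. distr n C y) * 2 powr (real_of_int j * e))"
    using assms(1,2) by (intro sum.cong) (auto simp: hist_eq_sum_bucket)
  show "real (card S) * 2 powr (- e) \<le> (\<Sum>j\<in>{0..J}. hist n m C e t j * 2 powr (real_of_int j * e))"
    unfolding weighted card_S sum_distrib_right[of _ _ "2 powr (- e)"]
    using assms(1) by (intro sum_mono card_bucket_weighted_bounds) simp
  show "(\<Sum>j\<in>{0..J}. hist n m C e t j * 2 powr (real_of_int j * e)) \<le> real (card S)"
    unfolding weighted card_S
    using assms(1) by (intro sum_mono card_bucket_weighted_bounds) simp
qed

lemma jstar_bounds:
  fixes m :: nat and e \<alpha> :: real
  defines "a \<equiv> \<alpha> * 2 powr (- real m)"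
  assumes "0 < e" "0 < \<alpha>"
    and "\<exists>j::int. 0 \<le> j \<and> 2 powr (- (real_of_int j + 1) * e) > a"
  shows "0 \<le> jstar m e \<alpha>"
    and "a < 2 powr (- (real_of_int (jstar m e \<alpha>) + 1) * e)"
    and "2 powr (- (real_of_int (jstar m e \<alpha>) + 2) * e) \<le> a"
proof -
  define L where "L = - log 2 a / e - 1"
  have "0 < a" using assms(3) by (simp add: a_def)
  have above_iff: "a < 2 powr (- (real_of_int j + 1) * e) \<longleftrightarrow> real_of_int j < L" for j
    using \<open>0 < a\<close> \<open>0 < e\<close> by (auto simp: less_powr_iff L_def field_simps)
  obtain j0 where "0 \<le> j0" "real_of_int j0 < L" using assms(4) above_iff by auto
  have J: "jstar m e \<alpha> = \<lceil>L\<rceil> - 1"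
    unfolding jstar_def a_def[symmetric]
  proof (rule Greatest_equality)
    have "a < 2 powr (- (real_of_int (\<lceil>L\<rceil> - 1) + 1) * e)"
      using ceiling_correct[of L] by (subst above_iff) simp
    then show "0 \<le> \<lceil>L\<rceil> - 1 \<and> a < 2 powr (- (real_of_int (\<lceil>L\<rceil> - 1) + 1) * e)"
      using \<open>0 \<le> j0\<close> \<open>real_of_int j0 < L\<close> by (simp add: less_ceiling_iff)
  next
    fix y assume "0 \<le> y \<and> a < 2 powr (- (real_of_int y + 1) * e)"
    then show "y \<le> \<lceil>L\<rceil> - 1" using above_iff by (auto simp: less_ceiling_iff)
  qed
  show "0 \<le> jstar m e \<alpha>"
    using J \<open>0 \<le> j0\<close> \<open>real_of_int j0 < L\<close> by (simp add: less_ceiling_iff)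
  show "a < 2 powr (- (real_of_int (jstar m e \<alpha>) + 1) * e)"
    using J ceiling_correct[of L] by (subst above_iff) simp
  have "\<not> a < 2 powr (- (real_of_int (jstar m e \<alpha> + 1) + 1) * e)"
    using J above_iff[of "jstar m e \<alpha> + 1"] ceiling_correct[of L] by simp
  then show "2 powr (- (real_of_int (jstar m e \<alpha>) + 2) * e) \<le> a"
    by (simp add: add_ac)
qed

lemma one_minus_le_two_powr_neg:
  assumes "0 \<le> (x :: real)"
  shows "1 - x \<le> 2 powr (- x)"
proof -
  have "x * ln 2 \<le> x" using assms ln_le_minus_one[of 2] by (simp add: mult_left_le)
  then have "1 - x \<le> 1 + (- x * ln 2)" by simp
  also have "\<dots> \<le> exp (- x * ln 2)" by (rule exp_ge_add_one_self)
  finally show ?thesis by (simp add: powr_def mult.commute)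
qed

lemma two_powr_le_one_plus:
  assumes "0 \<le> (s :: real)" "s \<le> 1/25"
  shows "2 powr (28 * s) \<le> 1 + 100 * s"
proof -
  define y where "y = 14 * s * ln 2"
  have "0 \<le> y" "y \<le> 14 * s" using assms ln_le_minus_one[of 2] by (simp_all add: y_def mult_left_le)
  then have "y \<le> 1" using assms by linarith
  have "exp y \<le> 1 + y + y^2" using \<open>0 \<le> y\<close> \<open>y \<le> 1\<close> by (rule exp_bound)
  also have "\<dots> \<le> 1 + 28 * s"
    using \<open>0 \<le> y\<close> \<open>y \<le> 1\<close> \<open>y \<le> 14 * s\<close> power_le_one[of y 2] mult_left_le[of y y] by (simp add: power2_eq_square)
  finally have exp_y: "exp y \<le> 1 + 28 * s" .
  have "2 powr (28 * s) = exp y * exp y" by (simp add: y_def powr_def exp_add[symmetric])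
  also have "\<dots> \<le> (1 + 28 * s) * (1 + 28 * s)" using exp_y assms by (intro mult_mono) auto
  also have "\<dots> \<le> 1 + 100 * s" using assms mult_left_mono[of s "1/25" s] by (simp add: algebra_simps)
  finally show ?thesis .
qed

lemma one_minus_le_two_powr_band:
  assumes "0 \<le> (s :: real)" "0 \<le> e" "e \<le> s"
  shows "1 - 100 * s \<le> 2 powr (- (28 * s) - e)"
proof -
  have "1 - 100 * s \<le> 1 - (28 * s + e)" using assms by simp
  also have "\<dots> \<le> 2 powr (- (28 * s) - e)" using one_minus_le_two_powr_neg[of "28 * s + e"] assms by simp
  finally show ?thesis .
qed

lemma two_powr_window_bounds:
  fixes J c :: int and e w a :: real
  assumes "0 \<le> e" "0 \<le> c" "(real_of_int c + 2) * e \<le> w"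
    and "2 powr (- (real_of_int J + 2) * e) \<le> a" "a < 2 powr (- (real_of_int J + 1) * e)"
  shows "2 powr (- real_of_int (J - c) * e) \<le> 2 powr w * a"
    and "2 powr (- w) * a \<le> 2 powr (- real_of_int (J + c) * e)"
    and "2 powr (- (real_of_int J + 1) * e) \<le> 2 powr w * a"
    and "2 powr (- w - e) * a \<le> 2 powr (- (real_of_int (J + c) + 1) * e)"
proof -
  have "0 < a" using assms(4) powr_gt_zero[of 2 "- (real_of_int J + 2) * e"] by linarith
  have "2 powr (- real_of_int (J - c) * e) = 2 powr ((real_of_int c + 2) * e) * 2 powr (- (real_of_int J + 2) * e)"
    unfolding powr_add[symmetric] by (rule arg_cong[where f = "\<lambda>x. 2 powr x"]) (simp add: algebra_simps)
  also have "\<dots> \<le> 2 powr w * a" using assms(3,4) by (intro mult_mono) auto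
  finally show "2 powr (- real_of_int (J - c) * e) \<le> 2 powr w * a" .
  have "2 powr (- w) * a \<le> 2 powr ((1 - real_of_int c) * e) * 2 powr (- (real_of_int J + 1) * e)"
    using assms(1-3,5) \<open>0 < a\<close> by (intro mult_mono) (auto simp: algebra_simps)
  also have "\<dots> = 2 powr (- real_of_int (J + c) * e)"
    unfolding powr_add[symmetric] by (rule arg_cong[where f = "\<lambda>x. 2 powr x"]) (simp add: algebra_simps)
  finally show lower: "2 powr (- w) * a \<le> 2 powr (- real_of_int (J + c) * e)" .
  have "2 powr (- w - e) * a = 2 powr (- w) * a * 2 powr (- e)" by (simp add: powr_diff powr_minus divide_inverse)
  also have "\<dots> \<le> 2 powr (- real_of_int (J + c) * e) * 2 powr (- e)" using lower by simp
  also have "\<dots> = 2 powr (- (real_of_int (J + c) + 1) * e)" by (simp add: powr_add[symmetric] algebra_simps)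
  finally show "2 powr (- w - e) * a \<le> 2 powr (- (real_of_int (J + c) + 1) * e)" .
  have "2 powr (- (real_of_int J + 1) * e) = 2 powr e * 2 powr (- (real_of_int J + 2) * e)"
    by (subst powr_add[symmetric]) (simp add: algebra_simps)
  also have "\<dots> \<le> 2 powr w * a"
  proof (intro mult_mono)
    have "0 \<le> real_of_int c * e" using assms(1,2) by simp
    then show "2 powr e \<le> 2 powr w" using assms(1,3) by (simp add: algebra_simps)
  qed (use assms(4) in auto)
  finally show "2 powr (- (real_of_int J + 1) * e) \<le> 2 powr w * a" .
qed

lemma eps_tilde_parameters:
  assumes "0 < \<epsilon>" "\<epsilon> < 1" "et = (4/100)^2 * \<epsilon>^2"
  shows "0 < et" "0 < sqrt et" "sqrt et \<le> 1/25" "et \<le> sqrt et" "et \<le> et powr (1/4)"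
    and "0 \<le> \<lceil>25 / sqrt et\<rceil>" "(real_of_int \<lceil>25 / sqrt et\<rceil> + 2) * et \<le> 28 * sqrt et"
proof -
  define s where "s = sqrt et"
  have "s = 4/100 * \<epsilon>" using assms(1,3) by (simp add: s_def power_mult_distrib[symmetric])
  then have s: "0 < s" "s \<le> 1/25" using assms(1,2) by auto
  have et_s: "et = s^2" using assms(3) by (simp add: s_def)
  then show "0 < et" "et \<le> sqrt et" using s by (auto simp: s_def[symmetric] power2_eq_square mult_left_le)
  then show "et \<le> et powr (1/4)" using powr_mono'[of "1/4" 1 et] s by (simp add: s_def)
  show "0 < sqrt et" "sqrt et \<le> 1/25" using s by (simp_all add: s_def)
  have "- 1 < 25 / s" using divide_pos_pos[of 25 s] s(1) by linarith
  then show "0 \<le> \<lceil>25 / sqrt et\<rceil>" by (simp add: s_def)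
  have "(real_of_int \<lceil>25 / s\<rceil> + 2) * s^2 \<le> (25 / s + 3) * s^2"
    using of_int_ceiling_le_add_one[of "25 / s"] by (intro mult_right_mono) (linarith, simp)
  also have "\<dots> = 25 * s + 3 * s^2" using s by (simp add: power2_eq_square field_simps)
  also have "\<dots> \<le> 28 * s" using s mult_left_le[of s s] by (simp add: power2_eq_square)
  finally show "(real_of_int \<lceil>25 / sqrt et\<rceil> + 2) * et \<le> 28 * sqrt et"
    using \<open>0 < et\<close> by (simp add: s_def)
qed

lemma threshold_split:
  fixes g :: "'a \<Rightarrow> real"
  assumes "a \<le> b"
  shows "{x \<in> A. a \<le> g x} = {x \<in> A. b < g x} \<union> {x \<in> A. a \<le> g x \<and> g x \<le> b}"
    and "{x \<in> A. b < g x} \<inter> {x \<in> A. a \<le> g x \<and> g x \<le> b} = {}"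
  using assms by auto

lemma sum_hist_approx_gH:
  fixes n m :: nat and C :: "bool list \<Rightarrow> bool list" and J :: int and e \<alpha> \<delta> :: real
  defines "a \<equiv> \<alpha> * 2 powr (- real m)" and "b \<equiv> 2 powr (- (real_of_int J + 1) * e)"
  assumes "0 < e" "t = nat \<lfloor>real n / e\<rfloor>" "a < b"
    and "band_mass n m C a b \<le> \<delta>"
  shows "\<bar>(\<Sum>j\<in>{0..J}. hist n m C e t j) - gH n m C \<alpha>\<bar> \<le> \<delta>"
proof -
  note split = threshold_split[of a b "bits m" "distr n C"]
  have "gH n m C \<alpha> = (\<Sum>y\<in>{y \<in> bits m. b < distr n C y}. distr n C y)
      + (\<Sum>y\<in>{y \<in> bits m. a \<le> distr n C y \<and> distr n C y \<le> b}. distr n C y)"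
    unfolding gH_def a_def[symmetric] using \<open>a < b\<close> split by (simp add: sum.union_disjoint)
  moreover have "(\<Sum>j\<in>{0..J}. hist n m C e t j) = (\<Sum>y\<in>{y \<in> bits m. b < distr n C y}. distr n C y)"
    unfolding b_def using assms(3,4) by (rule sum_hist_eq)
  moreover have "0 \<le> (\<Sum>y\<in>{y \<in> bits m. a \<le> distr n C y \<and> distr n C y \<le> b}. distr n C y)"
    by (simp add: sum_nonneg distr_nonneg)
  ultimately show ?thesis using assms(6) by (simp add: band_mass_def)
qed

lemma weighted_sum_hist_approx_gUH:
  fixes n m :: nat and C :: "bool list \<Rightarrow> bool list" and J :: int and e \<alpha> \<delta> :: real
  defines "a \<equiv> \<alpha> * 2 powr (- real m)" and "b \<equiv> 2 powr (- (real_of_int J + 1) * e)"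
  assumes "0 < e" "t = nat \<lfloor>real n / e\<rfloor>" "a < b" "1 \<le> \<alpha>"
    and "band_mass n m C a b \<le> \<delta>"
  shows "\<bar>(1 / 2 ^ m) * (\<Sum>j\<in>{0..J}. hist n m C e t j * 2 powr (real_of_int j * e)) - gUH n m C \<alpha>\<bar>
    \<le> e + \<delta>"
proof -
  define S where "S = {y \<in> bits m. b < distr n C y}"
  define M where "M = {y \<in> bits m. a \<le> distr n C y \<and> distr n C y \<le> b}"
  define X where "X = (\<Sum>j\<in>{0..J}. hist n m C e t j * 2 powr (real_of_int j * e))"
  have card_heavy: "card {y \<in> bits m. a \<le> distr n C y} = card S + card M"
    using threshold_split[of a b "bits m" "distr n C"] \<open>a < b\<close> unfolding S_def M_def
    by (simp add: card_Un_disjoint)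
  have "real (card M) * 2 powr (- real m) \<le> real (card M) * a"
    using \<open>1 \<le> \<alpha>\<close> by (simp add: a_def mult_left_mono)
  also have "\<dots> \<le> (\<Sum>y\<in>M. distr n C y)" by (rule sum_bounded_below) (simp add: M_def)
  also have "\<dots> \<le> \<delta>" using assms(7) by (simp add: M_def band_mass_def)
  finally have card_M: "real (card M) \<le> 2 ^ m * \<delta>"
    by (simp add: powr_minus powr_realpow field_simps)
  have card_S: "real (card S) \<le> 2 ^ m"
    using card_mono[of "bits m" S] card_bits[of m] by (simp add: S_def)
  have X_lo: "real (card S) * 2 powr (- e) \<le> X" and X_hi: "X \<le> real (card S)"
    unfolding X_def S_def b_def using weighted_sum_hist_bounds[OF assms(3,4)] by simp_all
  have "real (card S) * (1 - 2 powr (- e)) \<le> 2 ^ m * e"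
    using card_S one_minus_le_two_powr_neg[of e] powr_mono[of "- e" 0 2] assms(3) by (intro mult_mono) auto
  then have "\<bar>X - real (card {y \<in> bits m. a \<le> distr n C y})\<bar> \<le> 2 ^ m * (e + \<delta>)"
    using card_heavy X_lo X_hi card_M by (simp add: algebra_simps abs_le_iff)
  then show ?thesis
    unfolding gUH_def a_def[symmetric] X_def[symmetric] by (simp add: field_simps)
qed

theorem mainTheorem2:
  fixes n m :: nat and C :: "bool list \<Rightarrow> bool list" and \<epsilon> \<alpha> et :: real and t :: nat and c :: int
  assumes "n \<ge> 1" and "m \<ge> 1"
    and C_range: "\<forall>r\<in>bits n. C r \<in> bits m"
    and "0 < \<epsilon>" and "\<epsilon> < 1"
    and et_def: "et = (4/100)^2 * \<epsilon>^2"
    and t_def: "t = nat \<lfloor>real n / et\<rfloor>"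
    and "\<alpha> > 1"
    and jstar_exists: "\<exists>j::int. 0 \<le> j \<and> 2 powr (- (real_of_int j + 1) * et) > \<alpha> * 2 powr (- real m)"
    and hyp: "(\<Sum>y\<in>{y \<in> bits m. (1 - 100 * sqrt et) * (\<alpha> * 2 powr (- real m)) \<le> distr n C y \<and>
                                  distr n C y \<le> (1 + 100 * sqrt et) * (\<alpha> * 2 powr (- real m))}.
                 distr n C y) \<le> et powr (1/4)"
    and c_def: "c = \<lceil>25 / sqrt et\<rceil>"
  shows "2 powr (- real_of_int (jstar m et \<alpha> - c) * et) \<le> 2 powr (28 * sqrt et) * (\<alpha> * 2 powr (- real m))
       \<and> 2 powr (- real_of_int (jstar m et \<alpha> + c) * et) \<ge> 2 powr (- 28 * sqrt et) * (\<alpha> * 2 powr (- real m))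
       \<and> (\<Sum>j\<in>{jstar m et \<alpha> - c .. jstar m et \<alpha> + c}. hist n m C et t j) \<le> et powr (1/4)
       \<and> \<bar>(\<Sum>j\<in>{0 .. jstar m et \<alpha>}. hist n m C et t j) - gH n m C \<alpha>\<bar> \<le> et powr (1/4)
       \<and> \<bar>(1 / 2 ^ m) * (\<Sum>j\<in>{0 .. jstar m et \<alpha>}. hist n m C et t j * 2 powr (real_of_int j * et))
           - gUH n m C \<alpha>\<bar> \<le> 4 * et powr (1/4)"
proof -
  define s where "s = sqrt et"
  define a where "a = \<alpha> * 2 powr (- real m)"
  define J where "J = jstar m et \<alpha>"
  note par = eps_tilde_parameters[OF \<open>0 < \<epsilon>\<close> \<open>\<epsilon> < 1\<close> et_def, folded s_def c_def]
  have "0 < a" using \<open>\<alpha> > 1\<close> by (simp add: a_def)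
  have J: "0 \<le> J" "a < 2 powr (- (real_of_int J + 1) * et)" "2 powr (- (real_of_int J + 2) * et) \<le> a"
    using jstar_bounds[OF par(1) _ jstar_exists] \<open>\<alpha> > 1\<close> unfolding J_def a_def by auto
  note window = two_powr_window_bounds[OF less_imp_le[OF par(1)] par(6,7) J(3,2)]
  have near: "(1 - 100 * s) * a \<le> 2 powr (- (28 * s) - et) * a" "2 powr (28 * s) * a \<le> (1 + 100 * s) * a"
    using one_minus_le_two_powr_band[of s et] two_powr_le_one_plus[of s] par \<open>0 < a\<close> by simp_all
  have band: "band_mass n m C ((1 - 100 * s) * a) ((1 + 100 * s) * a) \<le> et powr (1/4)"
    using hyp unfolding band_mass_def s_def a_def .
  have "(\<Sum>j\<in>{J - c..J + c}. hist n m C et t j) \<le> band_mass n m C (2 powr (- (28 * s) - et) * a) (2 powr (28 * s) * a)"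
    using par(1) window(1,4) by (intro sum_hist_le_band_mass) auto
  also have "\<dots> \<le> et powr (1/4)" by (rule order_trans[OF band_mass_mono[OF near] band])
  finally have ii: "(\<Sum>j\<in>{J - c..J + c}. hist n m C et t j) \<le> et powr (1/4)" .
  have lower: "(1 - 100 * s) * a \<le> a" using par(2) \<open>0 < a\<close> by (simp add: algebra_simps)
  have "band_mass n m C a (2 powr (- (real_of_int J + 1) * et)) \<le> et powr (1/4)"
    by (rule order_trans[OF band_mass_mono[OF lower order_trans[OF window(3) near(2)]] band])
  note heavy_band = this[unfolded a_def]
  have iii: "\<bar>(\<Sum>j\<in>{0..J}. hist n m C et t j) - gH n m C \<alpha>\<bar> \<le> et powr (1/4)"
    using sum_hist_approx_gH[OF par(1) t_def J(2)[unfolded a_def] heavy_band] .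
  have "\<bar>(1 / 2 ^ m) * (\<Sum>j\<in>{0..J}. hist n m C et t j * 2 powr (real_of_int j * et)) - gUH n m C \<alpha>\<bar>
      \<le> et + et powr (1/4)"
    using \<open>\<alpha> > 1\<close> by (intro weighted_sum_hist_approx_gUH[OF par(1) t_def J(2)[unfolded a_def] _ heavy_band]) simp
  then show ?thesis using window(1,2) ii iii par(5) unfolding J_def s_def a_def by simp
qed

end
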